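(* A norm $\|\cdot\|$ on $\mathbb{R}^{d+1}$ is an $F$-norm if and only if (i) it is radially symmetric, i.e. $\|\mathbf{x}\|=\|(|x_0|,\dots,|x_d|)\|$ for all $\mathbf{x}$, and (ii) there exists a random vector $\mathbf{X}=(X_1,\dots,X_d)$ satisfying $(\mathcal{H})$ such that for any $x_1,\dots,x_d>0$, the Lebesgue derivative of $t\mapsto\|(t,1/x_1,\dots,1/x_d)\|$ on $[0,\infty)$ equals $P(X_1\le tx_1,\dots,X_d\le tx_d)$ almost everywhere, and $$\|(0,1/x_1,\dots,1/x_d)\|=E\big(\max(X_1/x_1,\dots,X_d/x_d)\big).$$ In that case $\|\cdot\|=\|\cdot\|_F$ with $F$ the distribution function of $\mathbf{X}$.
   Context: Condition $(\mathcal{H})$: each $X_i$ is a.s. nonnegative with $0<E(X_i)<\infty$. For such $\mathbf{X}$ with distribution function $F$, $\|\mathbf{x}\|_F=E(\max(|x_0|,|x_1|X_1,\dots,|x_d|X_d))$, $\mathbf{x}\in\mathbb{R}^{d+1}$; an $F$-norm is any norm on $\mathbb{R}^{d+1}$ of this form. (For any norm, $t\mapsto\|(t,\mathbf{y})\|$ is convex and hence absolutely continuous on $[0,\infty)$, so its Lebesgue derivative exists a.e.) *)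

theory Defs
  imports "HOL-Probability.Probability"
begin

text \<open>R^{d+1} is modelled as real^('d option): coordinate None is x_0,
  coordinate Some i (i :: 'd, a finite type with d elements) is x_i.
  A random vector X = (X_1,...,X_d) is represented by its distribution,
  a probability measure mu on the Borel sets of real^'d.\<close>

definition is_norm :: "(real^('d::finite option) \<Rightarrow> real) \<Rightarrow> bool" where
  "is_norm N \<longleftrightarrow>
     (\<forall>x. N x = 0 \<longleftrightarrow> x = 0) \<and>
     (\<forall>c x. N (c *\<^sub>R x) = \<bar>c\<bar> * N x) \<and>
     (\<forall>x y. N (x + y) \<le> N x + N y)"

definition cond_H :: "(real^('d::finite)) measure \<Rightarrow> bool" where
  "cond_H \<mu> \<longleftrightarrow> prob_space \<mu> \<and> sets \<mu> = sets borel \<and>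
     (\<forall>i. (AE y in \<mu>. 0 \<le> y $ i) \<and> integrable \<mu> (\<lambda>y. y $ i) \<and>
          0 < (\<integral>y. y $ i \<partial>\<mu>))"

definition F_norm :: "(real^('d::finite)) measure \<Rightarrow> real^('d option) \<Rightarrow> real" where
  "F_norm \<mu> x = (\<integral>y. Max (insert \<bar>x $ None\<bar> ((\<lambda>i. \<bar>x $ Some i\<bar> * y $ i) ` UNIV)) \<partial>\<mu>)"

definition is_F_norm :: "(real^('d::finite option) \<Rightarrow> real) \<Rightarrow> bool" where
  "is_F_norm N \<longleftrightarrow> (\<exists>\<mu> :: (real^'d) measure. cond_H \<mu> \<and> (\<forall>x. N x = F_norm \<mu> x))"

definition radially_symmetric :: "(real^('d::finite option) \<Rightarrow> real) \<Rightarrow> bool" where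
  "radially_symmetric N \<longleftrightarrow> (\<forall>x. N x = N (\<chi> j. \<bar>x $ j\<bar>))"

definition tvec :: "real \<Rightarrow> real^('d::finite) \<Rightarrow> real^('d option)" where
  "tvec t x = (\<chi> j. case j of None \<Rightarrow> t | Some i \<Rightarrow> 1 / x $ i)"

definition cond_ii :: "(real^('d::finite option) \<Rightarrow> real) \<Rightarrow> (real^'d) measure \<Rightarrow> bool" where
  "cond_ii N \<mu> \<longleftrightarrow>
     (\<forall>x :: real^'d. (\<forall>i. 0 < x $ i) \<longrightarrow>
        (AE t in lborel. 0 < t \<longrightarrow>
           ((\<lambda>s. N (tvec s x)) has_real_derivative
              measure \<mu> {y. \<forall>i. y $ i \<le> t * x $ i}) (at t)) \<and>
        N (tvec 0 x) = (\<integral>y. Max ((\<lambda>i. y $ i / x $ i) ` UNIV) \<partial>\<mu>))"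

end

theory Submission
  imports Defs
begin

text \<open>Fix x > 0 and put Z = max_i X_i / x_i. On the ray t \<mapsto> (t, 1/x) the F-norm is
  h(t) = E max(t, Z), so for 0 \<le> s \<le> t its increment lies between (t - s) P(Z \<le> s) and
  (t - s) P(Z \<le> t). Hence h has derivative G(t) = P(Z \<le> t) at every continuity point of the
  monotone G, i.e. almost everywhere, and h(0) = E Z.
  Conversely, if a norm N satisfies (ii), then f(t) = N(t, 1/x) is convex, so wherever f' = G its
  increments obey the same squeeze. On the dense set of such points this gives
  |(f - h)(t) - (f - h)(s)| \<le> (G t - G s)(t - s), and summing along fine chains shows that f - h is
  constant there; by continuity and f(0) = h(0) we get f = h. Every vector with positive entries
  lies on such a ray, and continuity together with radial symmetry of both norms does the rest.\<close>

locale seminorm =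
  fixes N :: "'a::real_vector \<Rightarrow> real"
  assumes triangle: "N (x + y) \<le> N x + N y"
    and homogeneous: "N (c *\<^sub>R x) = \<bar>c\<bar> * N x"
begin

lemma convex: "convex_on UNIV N"
proof (rule convex_onI)
  fix t :: real and x y assume t: "0 < t" "t < 1"
  have "N ((1 - t) *\<^sub>R x + t *\<^sub>R y) \<le> N ((1 - t) *\<^sub>R x) + N (t *\<^sub>R y)" by (rule triangle)
  also have "\<dots> = (1 - t) * N x + t * N y" using t by (simp add: homogeneous)
  finally show "N ((1 - t) *\<^sub>R x + t *\<^sub>R y) \<le> (1 - t) * N x + t * N y" .
qed simp

lemma convex_on_line: "convex_on UNIV (\<lambda>s. N (a + s *\<^sub>R b))"
proof (rule convex_onI)
  fix t u v :: real assume t: "0 < t" "t < 1"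
  have "a + ((1 - t) * u + t * v) *\<^sub>R b = (1 - t) *\<^sub>R (a + u *\<^sub>R b) + t *\<^sub>R (a + v *\<^sub>R b)"
    by (simp add: algebra_simps)
  then show "N (a + ((1 - t) *\<^sub>R u + t *\<^sub>R v) *\<^sub>R b) \<le> (1 - t) * N (a + u *\<^sub>R b) + t * N (a + v *\<^sub>R b)"
    using convex_onD[OF convex, of t "a + u *\<^sub>R b" "a + v *\<^sub>R b"] t by simp
qed simp

end

lemma seminorm_continuous:
  fixes N :: "'a::euclidean_space \<Rightarrow> real"
  assumes "seminorm N"
  shows "continuous_on UNIV N"
  by (rule convex_on_continuous[OF open_UNIV seminorm.convex[OF assms]])

lemma seminorm_continuous_on_line:
  fixes N :: "'a::real_vector \<Rightarrow> real"
  assumes "seminorm N"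
  shows "continuous_on UNIV (\<lambda>s. N (a + s *\<^sub>R b))"
  by (rule convex_on_continuous[OF open_UNIV seminorm.convex_on_line[OF assms]])

lemma is_norm_seminorm: "is_norm N \<Longrightarrow> seminorm N"
  unfolding is_norm_def by unfold_locales auto

lemma cond_HD:
  assumes "cond_H \<mu>"
  shows "prob_space \<mu>" "sets \<mu> = sets borel" "space \<mu> = UNIV" "AE y in \<mu>. \<forall>i. 0 \<le> y $ i"
    "\<And>i. integrable \<mu> (\<lambda>y. y $ i)"
  using assms sets_eq_imp_space_eq[of \<mu> borel] unfolding cond_H_def AE_all_countable by auto

lemma cond_H_borel_measurable:
  "cond_H \<mu> \<Longrightarrow> f \<in> borel_measurable borel \<Longrightarrow> f \<in> borel_measurable \<mu>"
  using measurable_cong_sets[OF cond_HD(2) refl] by blast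

definition F_integrand :: "real^('d::finite option) \<Rightarrow> real^'d \<Rightarrow> real" where
  "F_integrand x y = Max (insert \<bar>x $ None\<bar> ((\<lambda>i. \<bar>x $ Some i\<bar> * y $ i) ` UNIV))"

lemma F_norm_eq_integral: "F_norm \<mu> x = (\<integral>y. F_integrand x y \<partial>\<mu>)"
  by (simp add: F_norm_def F_integrand_def)

lemma F_integrand_eq_max:
  "F_integrand x y = max \<bar>x $ None\<bar> (Max ((\<lambda>i. \<bar>x $ Some i\<bar> * y $ i) ` UNIV))"
  unfolding F_integrand_def by (subst Max_insert) auto

lemma F_integrand_nonneg: "0 \<le> F_integrand x y"
  unfolding F_integrand_eq_max by simp

lemma F_integrand_ge:
  "\<bar>x $ None\<bar> \<le> F_integrand x y" "\<bar>x $ Some i\<bar> * y $ i \<le> F_integrand x y"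
  unfolding F_integrand_eq_max by (auto intro!: max.coboundedI2 Max_ge)

lemma F_integrand_le_iff:
  "F_integrand x y \<le> c \<longleftrightarrow> \<bar>x $ None\<bar> \<le> c \<and> (\<forall>i. \<bar>x $ Some i\<bar> * y $ i \<le> c)"
  unfolding F_integrand_eq_max by auto

lemma borel_measurable_F_integrand: "F_integrand x \<in> borel_measurable borel"
  unfolding F_integrand_eq_max by measurable

lemma integrable_F_integrand:
  assumes "cond_H \<mu>"
  shows "integrable \<mu> (F_integrand x)"
proof -
  interpret prob_space \<mu> using cond_HD(1)[OF assms] .
  define b where "b y = \<bar>x $ None\<bar> + (\<Sum>i\<in>UNIV. \<bar>x $ Some i\<bar> * \<bar>y $ i\<bar>)" for y
  have b_integrable: "integrable \<mu> b"
    unfolding b_def using cond_HD(5)[OF assms] by auto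
  have b_bound: "F_integrand x y \<le> b y" for y
  proof -
    have "\<bar>x $ Some i\<bar> * y $ i \<le> (\<Sum>i\<in>UNIV. \<bar>x $ Some i\<bar> * \<bar>y $ i\<bar>)" for i
    proof -
      have "\<bar>x $ Some i\<bar> * y $ i \<le> \<bar>x $ Some i\<bar> * \<bar>y $ i\<bar>" by (simp add: mult_left_mono)
      also have "\<dots> \<le> (\<Sum>i\<in>UNIV. \<bar>x $ Some i\<bar> * \<bar>y $ i\<bar>)" by (rule member_le_sum) auto
      finally show ?thesis .
    qed
    moreover have "0 \<le> (\<Sum>i\<in>UNIV. \<bar>x $ Some i\<bar> * \<bar>y $ i\<bar>)" by (simp add: sum_nonneg)
    ultimately show ?thesis unfolding b_def F_integrand_le_iff by (auto intro: add_increasing)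
  qed
  show ?thesis
  proof (rule Bochner_Integration.integrable_bound[OF b_integrable])
    show "F_integrand x \<in> borel_measurable \<mu>"
      by (rule cond_H_borel_measurable[OF assms borel_measurable_F_integrand])
    show "AE y in \<mu>. norm (F_integrand x y) \<le> norm (b y)"
      using F_integrand_nonneg[of x] b_bound by (intro AE_I2) (force intro: order_trans)
  qed
qed

lemma F_integrand_triangle: "F_integrand (a + b) y \<le> F_integrand a y + F_integrand b y"
proof -
  have "\<bar>(a + b) $ Some i\<bar> * y $ i \<le> F_integrand a y + F_integrand b y" for i
  proof (cases "0 \<le> y $ i")
    case True
    then have "\<bar>(a + b) $ Some i\<bar> * y $ i \<le> \<bar>a $ Some i\<bar> * y $ i + \<bar>b $ Some i\<bar> * y $ i"
      by (simp add: mult_right_mono flip: distrib_right)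
    then show ?thesis using F_integrand_ge(2)[of a i y] F_integrand_ge(2)[of b i y] by linarith
  next
    case False
    then have "\<bar>(a + b) $ Some i\<bar> * y $ i \<le> 0" by (simp add: mult_nonneg_nonpos)
    then show ?thesis using F_integrand_nonneg[of a y] F_integrand_nonneg[of b y] by linarith
  qed
  moreover have "\<bar>(a + b) $ None\<bar> \<le> F_integrand a y + F_integrand b y"
    using F_integrand_ge(1)[of a y] F_integrand_ge(1)[of b y] by simp
  ultimately show ?thesis unfolding F_integrand_le_iff by blast
qed

lemma F_integrand_scaleR: "F_integrand (c *\<^sub>R a) y = \<bar>c\<bar> * F_integrand a y"
proof -
  have "mono (\<lambda>z::real. \<bar>c\<bar> * z)" by (simp add: mono_def mult_left_mono)
  then have "\<bar>c\<bar> * F_integrand a y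
      = Max ((\<lambda>z. \<bar>c\<bar> * z) ` insert \<bar>a $ None\<bar> ((\<lambda>i. \<bar>a $ Some i\<bar> * y $ i) ` UNIV))"
    unfolding F_integrand_def by (rule mono_Max_commute) auto
  then show ?thesis
    unfolding F_integrand_def by (simp add: image_image abs_mult mult.assoc)
qed

lemma seminorm_F_norm:
  assumes "cond_H \<mu>"
  shows "seminorm (F_norm \<mu>)"
proof
  fix x y
  show "F_norm \<mu> (x + y) \<le> F_norm \<mu> x + F_norm \<mu> y"
    unfolding F_norm_eq_integral
    by (subst Bochner_Integration.integral_add[symmetric])
       (auto intro!: integral_mono integrable_F_integrand[OF assms] F_integrand_triangle)
qed (simp add: F_norm_eq_integral F_integrand_scaleR)

lemma F_norm_abs: "F_norm \<mu> (\<chi> j. \<bar>x $ j\<bar>) = F_norm \<mu> x"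
  by (simp add: F_norm_def)

lemma tvec_eq_line: "tvec s x = tvec 0 x + s *\<^sub>R axis None 1"
  by (simp add: vec_eq_iff tvec_def axis_def split: option.split)

definition max_ratio :: "real^'d::finite \<Rightarrow> real^'d \<Rightarrow> real" where
  "max_ratio x y = Max ((\<lambda>i. y $ i / x $ i) ` UNIV)"

definition ray_cdf :: "(real^'d::finite) measure \<Rightarrow> real^'d \<Rightarrow> real \<Rightarrow> real" where
  "ray_cdf \<mu> x t = measure \<mu> {y. \<forall>i. y $ i \<le> t * x $ i}"

lemma borel_measurable_max_ratio: "max_ratio x \<in> borel_measurable borel"
  unfolding max_ratio_def by measurable

lemma max_ratio_le_iff: "\<forall>i. 0 < x $ i \<Longrightarrow> max_ratio x y \<le> t \<longleftrightarrow> (\<forall>i. y $ i \<le> t * x $ i)"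
  unfolding max_ratio_def by (simp add: pos_divide_le_eq)

lemma ray_cdf_eq: "\<forall>i. 0 < x $ i \<Longrightarrow> ray_cdf \<mu> x t = measure \<mu> {y. max_ratio x y \<le> t}"
  by (simp add: ray_cdf_def max_ratio_le_iff)

lemma sets_max_ratio_le:
  assumes "cond_H \<mu>"
  shows "{y. max_ratio x y \<le> t} \<in> sets \<mu>"
  using measurable_sets[OF borel_measurable_max_ratio atMost_borel, of x t] cond_HD(2)[OF assms]
  by (simp add: vimage_def)

lemma F_integrand_tvec:
  assumes "\<forall>i. 0 < x $ i" "0 \<le> t"
  shows "F_integrand (tvec t x) y = max t (max_ratio x y)"
  using assms unfolding F_integrand_eq_max max_ratio_def by (simp add: tvec_def abs_of_pos)

lemma F_norm_tvec_0:
  assumes H: "cond_H \<mu>" and x: "\<forall>i. 0 < x $ i"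
  shows "F_norm \<mu> (tvec 0 x) = (\<integral>y. max_ratio x y \<partial>\<mu>)"
  unfolding F_norm_eq_integral F_integrand_tvec[OF x order_refl]
proof (rule integral_cong_AE)
  show "(\<lambda>y. max 0 (max_ratio x y)) \<in> borel_measurable \<mu>" "max_ratio x \<in> borel_measurable \<mu>"
    by (intro cond_H_borel_measurable[OF H] borel_measurable_max borel_measurable_const borel_measurable_max_ratio)+
  obtain i :: 'a where True by simp
  have "0 \<le> max_ratio x y" if "\<forall>i. 0 \<le> y $ i" for y
  proof -
    have "y $ i / x $ i \<le> max_ratio x y" unfolding max_ratio_def by (rule Max_ge) auto
    moreover have "0 \<le> y $ i / x $ i" using that x by (simp add: less_imp_le)
    ultimately show ?thesis by linarith
  qed
  then show "AE y in \<mu>. max 0 (max_ratio x y) = max_ratio x y"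
    using cond_HD(4)[OF H] by (auto elim: AE_mp)
qed

lemma ray_cdf_mono:
  assumes H: "cond_H \<mu>" and x: "\<forall>i. 0 < x $ i"
  shows "mono (ray_cdf \<mu> x)"
proof
  interpret prob_space \<mu> using cond_HD(1)[OF H] .
  fix s t :: real assume "s \<le> t"
  then have "{y. max_ratio x y \<le> s} \<subseteq> {y. max_ratio x y \<le> t}" by auto
  then show "ray_cdf \<mu> x s \<le> ray_cdf \<mu> x t"
    unfolding ray_cdf_eq[OF x] by (rule finite_measure_mono) (rule sets_max_ratio_le[OF H])
qed

lemma F_norm_tvec_increment:
  assumes H: "cond_H \<mu>" and x: "\<forall>i. 0 < x $ i" and "0 \<le> s" "s \<le> t"
  shows "(t - s) * ray_cdf \<mu> x s \<le> F_norm \<mu> (tvec t x) - F_norm \<mu> (tvec s x)"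
    and "F_norm \<mu> (tvec t x) - F_norm \<mu> (tvec s x) \<le> (t - s) * ray_cdf \<mu> x t"
proof -
  interpret prob_space \<mu> using cond_HD(1)[OF H] .
  define I where "I r y = (t - s) * indicator {y. max_ratio x y \<le> r} y" for r y
  have I_integrable: "integrable \<mu> (I r)" for r
    unfolding I_def
    by (intro integrable_mult_right integrable_real_indicator sets_max_ratio_le[OF H])
       (simp add: less_top[symmetric])
  have I_integral: "(\<integral>y. I r y \<partial>\<mu>) = (t - s) * ray_cdf \<mu> x r" for r
    unfolding I_def ray_cdf_eq[OF x] using sets_max_ratio_le[OF H] cond_HD(3)[OF H] by simp
  have integrand: "F_integrand (tvec r x) = (\<lambda>y. max r (max_ratio x y))" if "0 \<le> r" for r
    using F_integrand_tvec[OF x that] by blast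
  have integrable: "integrable \<mu> (\<lambda>y. max r (max_ratio x y))" if "0 \<le> r" for r
    using integrable_F_integrand[OF H, of "tvec r x"] by (simp add: integrand[OF that])
  have "F_norm \<mu> (tvec t x) - F_norm \<mu> (tvec s x) = (\<integral>y. max t (max_ratio x y) - max s (max_ratio x y) \<partial>\<mu>)"
    unfolding F_norm_eq_integral using assms(3,4)
    by (simp add: integrand integrable Bochner_Integration.integral_diff)
  moreover have "integrable \<mu> (\<lambda>y. max t (max_ratio x y) - max s (max_ratio x y))"
    using assms(3,4) by (simp add: integrable)
  moreover have "I s y \<le> max t (max_ratio x y) - max s (max_ratio x y)"
    and "max t (max_ratio x y) - max s (max_ratio x y) \<le> I t y" for y
    using assms(4) by (auto simp: I_def indicator_def)
  ultimately show "(t - s) * ray_cdf \<mu> x s \<le> F_norm \<mu> (tvec t x) - F_norm \<mu> (tvec s x)"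
    and "F_norm \<mu> (tvec t x) - F_norm \<mu> (tvec s x) \<le> (t - s) * ray_cdf \<mu> x t"
    by (auto simp flip: I_integral intro!: integral_mono I_integrable)
qed

lemma AE_lborel_obtain_between:
  fixes u v :: real
  assumes "AE t in lborel. P t" "u < v"
  obtains t where "u < t" "t < v" "P t"
proof -
  from assms(1) obtain Z where Z: "{t. \<not> P t} \<subseteq> Z" "emeasure lborel Z = 0" "Z \<in> sets lborel"
    by (auto elim!: AE_E)
  have "\<not> {u<..<v} \<subseteq> Z"
  proof
    assume "{u<..<v} \<subseteq> Z"
    then have "emeasure lborel {u<..<v} \<le> 0" using Z(2,3) emeasure_mono by metis
    then show False using assms(2) by simp
  qed
  then obtain t where "u < t" "t < v" "t \<notin> Z" by (meson greaterThanLessThan_iff subsetI)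
  then show thesis using Z(1) that by blast
qed

lemma has_real_derivative_squeeze:
  fixes h g :: "real \<Rightarrow> real"
  assumes incr: "\<And>s u. a \<le> s \<Longrightarrow> s \<le> u \<Longrightarrow> (u - s) * g s \<le> h u - h s \<and> h u - h s \<le> (u - s) * g u"
    and "a < t" and "isCont g t"
  shows "(h has_real_derivative g t) (at t)"
proof -
  have slope: "min (g t) (g y) \<le> (h y - h t) / (y - t) \<and> (h y - h t) / (y - t) \<le> max (g t) (g y)"
    if "a < y" "y \<noteq> t" for y
  proof (cases "t < y")
    case True
    then have "g t \<le> (h y - h t) / (y - t) \<and> (h y - h t) / (y - t) \<le> g y"
      using incr[of t y] \<open>a < t\<close> by (simp add: pos_le_divide_eq pos_divide_le_eq mult.commute)
    then show ?thesis by linarith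
  next
    case False
    then have "(h y - h t) / (y - t) = (h t - h y) / (t - y)" "y < t"
      using that by (metis minus_diff_eq minus_divide_divide, simp)
    then have "g y \<le> (h y - h t) / (y - t) \<and> (h y - h t) / (y - t) \<le> g t"
      using incr[of y t] \<open>a < y\<close> by (simp add: pos_le_divide_eq pos_divide_le_eq mult.commute)
    then show ?thesis by linarith
  qed
  have "\<forall>\<^sub>F y in at t. a < y \<and> y \<noteq> t"
    using order_tendstoD(1)[OF tendsto_ident_at \<open>a < t\<close>] eventually_neq_at_within[of t t]
    by eventually_elim simp
  then have "\<forall>\<^sub>F y in at t. min (g t) (g y) \<le> (h y - h t) / (y - t)"
    and "\<forall>\<^sub>F y in at t. (h y - h t) / (y - t) \<le> max (g t) (g y)"
    using slope by (auto elim: eventually_mono)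
  moreover have "((\<lambda>y. min (g t) (g y)) \<longlongrightarrow> g t) (at t)" "((\<lambda>y. max (g t) (g y)) \<longlongrightarrow> g t) (at t)"
    using tendsto_min[OF tendsto_const[of "g t"] isContD[OF \<open>isCont g t\<close>]]
      tendsto_max[OF tendsto_const[of "g t"] isContD[OF \<open>isCont g t\<close>]] by simp_all
  ultimately show ?thesis
    unfolding has_field_derivative_iff by (rule tendsto_sandwich)
qed

lemma convex_on_increment_bounds:
  fixes f g :: "real \<Rightarrow> real"
  assumes "convex_on UNIV f" "(f has_real_derivative g s) (at s)" "(f has_real_derivative g t) (at t)"
  shows "(t - s) * g s \<le> f t - f s \<and> f t - f s \<le> (t - s) * g t"
  using convex_on_imp_above_tangent[OF assms(1) connected_UNIV _ _ assms(2)]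
    convex_on_imp_above_tangent[OF assms(1) connected_UNIV _ _ assms(3)]
  by (force simp: algebra_simps)

lemma squeezed_increments_diff_eq:
  fixes f h g :: "real \<Rightarrow> real"
  assumes "mono g"
    and f: "\<And>s t. s \<in> D \<Longrightarrow> t \<in> D \<Longrightarrow> s < t \<Longrightarrow> (t - s) * g s \<le> f t - f s \<and> f t - f s \<le> (t - s) * g t"
    and h: "\<And>s t. s \<in> D \<Longrightarrow> t \<in> D \<Longrightarrow> s < t \<Longrightarrow> (t - s) * g s \<le> h t - h s \<and> h t - h s \<le> (t - s) * g t"
    and dense: "\<And>u v. a \<le> u \<Longrightarrow> u < v \<Longrightarrow> \<exists>t\<in>D. u < t \<and> t < v"
    and "a \<in> D" "b \<in> D" "a \<le> b"
  shows "f b - h b = f a - h a"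
proof -
  define k where "k t = f t - h t" for t
  have step: "\<bar>k t - k s\<bar> \<le> \<delta> * (g t - g s)" if "s \<in> D" "t \<in> D" "s \<le> t" "t - s \<le> \<delta>" for s t \<delta>
  proof (cases "s = t")
    case False
    then have "s < t" using that(3) by simp
    then have "\<bar>k t - k s\<bar> \<le> (t - s) * (g t - g s)"
      using f[OF that(1,2)] h[OF that(1,2)] unfolding k_def abs_le_iff right_diff_distrib by linarith
    also have "\<dots> \<le> \<delta> * (g t - g s)"
      using that monoD[OF \<open>mono g\<close>, of s t] by (intro mult_right_mono) auto
    finally show ?thesis .
  qed simp
  \<comment> \<open>Each step of length at most \<delta> contributes at most \<delta> times the increment of g, which telescopes.\<close>
  have chain: "\<bar>k t - k a\<bar> \<le> \<delta> * (g t - g a)"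
    if "0 < \<delta>" "t \<in> D" "a \<le> t" "t - a \<le> real n * \<delta> / 2" for \<delta> n t
    using that(2-)
  proof (induction n arbitrary: t)
    case 0
    then show ?case by simp
  next
    case (Suc n)
    show ?case
    proof (cases "t - a \<le> \<delta>")
      case True
      then show ?thesis using step[OF \<open>a \<in> D\<close>] Suc.prems by blast
    next
      case False
      then obtain c where c: "c \<in> D" "t - \<delta> < c" "c < t - \<delta> / 2"
        using dense[of "t - \<delta>" "t - \<delta> / 2"] \<open>0 < \<delta>\<close> by auto
      have "\<bar>k c - k a\<bar> \<le> \<delta> * (g c - g a)"
        using c False Suc.prems by (intro Suc.IH) (auto simp: field_simps)
      moreover have "\<bar>k t - k c\<bar> \<le> \<delta> * (g t - g c)"
        using c \<open>0 < \<delta>\<close> Suc.prems by (intro step) auto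
      ultimately show ?thesis by (simp add: abs_le_iff algebra_simps)
    qed
  qed
  have small: "\<bar>k b - k a\<bar> \<le> \<delta> * (g b - g a)" if "0 < \<delta>" for \<delta>
  proof -
    obtain n where "2 * (b - a) / \<delta> \<le> real n" using real_arch_simple by blast
    then show ?thesis using chain[OF that \<open>b \<in> D\<close> \<open>a \<le> b\<close>] that by (simp add: field_simps)
  qed
  have "\<bar>k b - k a\<bar> \<le> 0"
  proof (rule field_le_epsilon)
    fix e :: real assume "0 < e"
    define c where "c = g b - g a"
    have "0 \<le> c" using monoD[OF \<open>mono g\<close> \<open>a \<le> b\<close>] by (simp add: c_def)
    have "\<bar>k b - k a\<bar> \<le> e / (c + 1) * c" using small[of "e / (c + 1)"] \<open>0 < e\<close> \<open>0 \<le> c\<close> by (simp add: c_def)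
    also have "\<dots> \<le> e" using \<open>0 < e\<close> \<open>0 \<le> c\<close> by (simp add: field_simps)
    finally show "\<bar>k b - k a\<bar> \<le> 0 + e" by simp
  qed
  then show ?thesis by (simp add: k_def)
qed

lemma F_norm_cond_ii:
  assumes H: "cond_H \<mu>"
  shows "cond_ii (F_norm \<mu>) \<mu>"
  unfolding cond_ii_def ray_cdf_def[symmetric]
proof (intro allI impI conjI)
  fix x :: "real^'a" assume x: "\<forall>i. 0 < x $ i"
  have "{t. \<not> isCont (ray_cdf \<mu> x) t} \<in> null_sets lborel"
    by (intro countable_imp_null_set_lborel mono_ctble_discont ray_cdf_mono[OF H x])
  then show "AE t in lborel. 0 < t \<longrightarrow>
      ((\<lambda>s. F_norm \<mu> (tvec s x)) has_real_derivative ray_cdf \<mu> x t) (at t)"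
    using F_norm_tvec_increment[OF H x]
    by (auto elim!: AE_mp[OF AE_not_in] intro!: has_real_derivative_squeeze[where a = 0])
  show "F_norm \<mu> (tvec 0 x) = (\<integral>y. Max ((\<lambda>i. y $ i / x $ i) ` UNIV) \<partial>\<mu>)"
    using F_norm_tvec_0[OF H x] by (simp add: max_ratio_def)
qed

lemma eq_F_norm_on_ray:
  assumes N: "is_norm N" and H: "cond_H \<mu>" and ii: "cond_ii N \<mu>"
    and x: "\<forall>i. 0 < x $ i" and "0 \<le> t"
  shows "N (tvec t x) = F_norm \<mu> (tvec t x)"
proof -
  define f where "f s = N (tvec 0 x + s *\<^sub>R axis None 1)" for s
  define h where "h s = F_norm \<mu> (tvec 0 x + s *\<^sub>R axis None 1)" for s
  define g where "g = ray_cdf \<mu> x"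
  define D where "D = {s. 0 < s \<and> (f has_real_derivative g s) (at s)}"
  have deriv: "AE s in lborel. 0 < s \<longrightarrow> (f has_real_derivative g s) (at s)" and "f 0 = h 0"
    using ii x F_norm_tvec_0[OF H x] unfolding cond_ii_def f_def h_def g_def ray_cdf_def max_ratio_def
    by (simp_all flip: tvec_eq_line)
  have dense: "\<exists>s\<in>D. u < s \<and> s < v" if "0 \<le> u" "u < v" for u v
  proof -
    obtain s where s: "u < s" "s < v" "0 < s \<longrightarrow> (f has_real_derivative g s) (at s)"
      using AE_lborel_obtain_between[OF deriv \<open>u < v\<close>] by blast
    then have "s \<in> D" using \<open>0 \<le> u\<close> unfolding D_def by simp
    then show ?thesis using s by blast
  qed
  have f_convex: "convex_on UNIV f"
    unfolding f_def by (rule seminorm.convex_on_line[OF is_norm_seminorm[OF N]])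
  have f_incr: "(t - s) * g s \<le> f t - f s \<and> f t - f s \<le> (t - s) * g t"
    if "s \<in> D" "t \<in> D" "s < t" for s t
    using that unfolding D_def by (intro convex_on_increment_bounds[OF f_convex]) auto
  have h_incr: "(t - s) * g s \<le> h t - h s \<and> h t - h s \<le> (t - s) * g t"
    if "s \<in> D" "t \<in> D" "s < t" for s t
    using F_norm_tvec_increment[OF H x, of s t] that by (simp add: D_def h_def g_def flip: tvec_eq_line)
  have g_mono: "mono g"
    unfolding g_def by (rule ray_cdf_mono[OF H x])
  have diff_eq: "f b - h b = f a - h a" if ab: "a \<in> D" "b \<in> D" "a \<le> b" for a b
  proof (rule squeezed_increments_diff_eq[OF g_mono f_incr h_incr _ ab])
    fix u v assume "a \<le> u" "u < v"
    moreover have "0 < a" using \<open>a \<in> D\<close> by (simp add: D_def)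
    ultimately show "\<exists>s\<in>D. u < s \<and> s < v" using dense[of u v] by simp
  qed
  have const_on_D: "f s - h s = f s' - h s'" if "s \<in> D" "s' \<in> D" for s s'
  proof (cases "s \<le> s'")
    case True
    then show ?thesis using diff_eq[OF that] by simp
  next
    case False
    then show ?thesis using diff_eq[OF that(2,1)] by simp
  qed
  have "continuous_on UNIV f" "continuous_on UNIV h"
    unfolding f_def h_def
    by (rule seminorm_continuous_on_line[OF is_norm_seminorm[OF N]],
        rule seminorm_continuous_on_line[OF seminorm_F_norm[OF H]])
  then have k_continuous: "continuous_on UNIV (\<lambda>s. f s - h s)" by (rule continuous_on_diff)
  have closure_D: "s \<in> closure D" if s: "0 \<le> s" for s
    unfolding closure_approachable
  proof (intro allI impI)
    fix e :: real assume "0 < e"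
    then obtain d where "d \<in> D" "s < d" "d < s + e" using dense[OF s, of "s + e"] by auto
    then have "dist d s < e" by (simp add: dist_real_def)
    then show "\<exists>d\<in>D. dist d s < e" using \<open>d \<in> D\<close> by blast
  qed
  obtain d where d: "d \<in> D" using dense[of 0 1] by auto
  have k_const: "f s - h s = f d - h d" if "0 \<le> s" for s
  proof (rule continuous_constant_on_closure[where f = "\<lambda>s. f s - h s" and S = D])
    show "continuous_on (closure D) (\<lambda>s. f s - h s)"
      using k_continuous by (rule continuous_on_subset) simp
    show "f s' - h s' = f d - h d" if "s' \<in> D" for s'
      using const_on_D[OF that d] .
    show "s \<in> closure D" using closure_D[OF that] .
  qed
  have "f t = h t" using k_const[of t] k_const[of 0] \<open>f 0 = h 0\<close> \<open>0 \<le> t\<close> by simp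
  then show ?thesis unfolding f_def h_def by (simp flip: tvec_eq_line)
qed

lemma eq_F_norm_nonneg:
  assumes N: "is_norm N" and H: "cond_H \<mu>" and ii: "cond_ii N \<mu>" and v: "\<forall>j. 0 \<le> v $ j"
  shows "N v = F_norm \<mu> v"
proof -
  let ?P = "{w :: real^('a option). \<forall>j. 0 < w $ j}"
  have "N w = F_norm \<mu> w" if "w \<in> ?P" for w
  proof -
    define x :: "real^'a" where "x = (\<chi> i. 1 / w $ Some i)"
    have "w = tvec (w $ None) x" using that by (simp add: vec_eq_iff tvec_def x_def split: option.split)
    moreover have "\<forall>i. 0 < x $ i" "0 \<le> w $ None" using that by (simp_all add: x_def less_imp_le)
    ultimately show ?thesis using eq_F_norm_on_ray[OF N H ii] by metis
  qed
  then have "closure ?P \<subseteq> {w. N w = F_norm \<mu> w}"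
    by (intro closure_minimal closed_Collect_eq seminorm_continuous is_norm_seminorm[OF N]
        seminorm_F_norm[OF H]) auto
  moreover have "v \<in> closure ?P"
    unfolding closure_sequential
  proof (intro exI conjI allI)
    show "v + inverse (real (Suc n)) *\<^sub>R 1 \<in> ?P" for n
      using v by (simp add: add_nonneg_pos)
    show "(\<lambda>n. v + inverse (real (Suc n)) *\<^sub>R 1) \<longlonglongrightarrow> v"
      using tendsto_add[OF tendsto_const tendsto_scaleR[OF LIMSEQ_inverse_real_of_nat tendsto_const]]
      by simp
  qed
  ultimately show ?thesis by blast
qed

lemma eq_F_norm:
  assumes "is_norm N" "radially_symmetric N" "cond_H \<mu>" "cond_ii N \<mu>"
  shows "N x = F_norm \<mu> x"
  using assms eq_F_norm_nonneg[OF assms(1,3,4), of "\<chi> j. \<bar>x $ j\<bar>"]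
  by (simp add: radially_symmetric_def F_norm_abs)

theorem theorem2p9:
  fixes N :: "real^('d::finite option) \<Rightarrow> real"
  assumes "is_norm N"
  shows "(is_F_norm N \<longleftrightarrow>
            radially_symmetric N \<and> (\<exists>\<mu> :: (real^'d) measure. cond_H \<mu> \<and> cond_ii N \<mu>))
       \<and> (\<forall>\<mu> :: (real^'d) measure. radially_symmetric N \<and> cond_H \<mu> \<and> cond_ii N \<mu>
            \<longrightarrow> (\<forall>x. N x = F_norm \<mu> x))"
proof -
  have F_norm_conditions: "radially_symmetric N \<and> (\<exists>\<mu> :: (real^'d) measure. cond_H \<mu> \<and> cond_ii N \<mu>)"
    if "is_F_norm N"
  proof -
    obtain \<mu> :: "(real^'d) measure" where H: "cond_H \<mu>" and "N = F_norm \<mu>"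
      using \<open>is_F_norm N\<close> unfolding is_F_norm_def by blast
    then show ?thesis using F_norm_cond_ii[OF H] by (auto simp: radially_symmetric_def F_norm_abs)
  qed
  then show ?thesis using eq_F_norm[OF assms] unfolding is_F_norm_def by blast
qed

end
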